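(* Consider a single flow on a route of $n$ links $\mathcal{T}_0,\dots,\mathcal{T}_{n-1}$ (a line network) under the $\phi$-hop interference model, $0\le\phi\le n-1$. The Ordered Round-Robin policy $ORR$ is deadline-optimal among all admissible cyclic policies, its maximum packet delay is \[ \tau^*(ORR)=n+\phi, \] and its activation rates are $\bar{\mu}^{ORR}_e=\frac{1}{\phi+1}$ for every link $e$ of the route.
   Context: Time is slotted. Under $\phi$-hop interference on the line, distinct links $\mathcal{T}_j,\mathcal{T}_{j'}$ cannot be active in the same slot if $|j-j'|\le\phi$. Each link $\mathcal{T}_j$ has a slice of width $w_j$ for the flow, with a FCFS queue; the flow has deterministic fluid arrival rate $\lambda>0$ per slot at the source. Units arriving in slot $t$ are available for service at the first link from slot $t+1$; an activated link serves $\min\{Q,w_j\}$ from its queue of size $Q$, and units served at a link in slot $t$ are available at the next link from slot $t+1$; a packet's delay is $t_d-t_a$, where $t_a$ is its arrival slot and $t_d$ the slot in which it is served at the last link. Policies are admissible (respect interference, work-conserving) and cyclic: $\mu^\pi(t)=\mu^\pi(t+K^\pi)$ for all $t\ge0$; $\bar{\mu}^\pi_e=\frac1{K^\pi}\sum_{t=0}^{K^\pi-1}\mu^\pi_e(t)$. For a policy $\pi$, $\tau^*(\pi,\boldsymbol{w},\lambda)$ is the maximum delay seen by any packet (equivalently the minimum deadline met by all packets) and $\tau^*(\pi)=\lim_{\lambda\to 0}\tau^*(\pi,\boldsymbol{w},\lambda)$. A cyclic admissible policy $\pi$ is deadline-optimal if $\tau^*(\pi)\le\tau^*(\pi')$ for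 all cyclic admissible $\pi'$. The $ORR$ policy has period $\phi+1$: in slot $t$ it activates every link $\mathcal{T}_j$ with $j\equiv t \pmod{\phi+1}$. *)

theory Defs
  imports "HOL-Analysis.Analysis"
begin

text \<open>Line network with links 0..n-1. A schedule mu t j says link j is activated in slot t.\<close>

definition admissible :: "nat \<Rightarrow> nat \<Rightarrow> (nat \<Rightarrow> nat \<Rightarrow> bool) \<Rightarrow> bool" where
  "admissible n phi mu \<longleftrightarrow>
     (\<forall>t j. mu t j \<longrightarrow> j < n) \<and>
     (\<forall>t j j'. j < n \<longrightarrow> j' < n \<longrightarrow> j \<noteq> j' \<longrightarrow>
        (j \<le> j' + phi \<and> j' \<le> j + phi) \<longrightarrow> \<not> (mu t j \<and> mu t j'))"

definition cyclic :: "(nat \<Rightarrow> nat \<Rightarrow> bool) \<Rightarrow> nat \<Rightarrow> bool" where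
  "cyclic mu K \<longleftrightarrow> K > 0 \<and> (\<forall>t. mu (t + K) = mu t)"

definition ORR :: "nat \<Rightarrow> nat \<Rightarrow> nat \<Rightarrow> nat \<Rightarrow> bool" where
  "ORR n phi t j \<longleftrightarrow> j < n \<and> j mod (phi + 1) = t mod (phi + 1)"

definition rate :: "(nat \<Rightarrow> nat \<Rightarrow> bool) \<Rightarrow> nat \<Rightarrow> nat \<Rightarrow> real" where
  "rate mu K e = (\<Sum>t<K. if mu t e then 1 else 0) / real K"

text \<open>cum mu w lam j t: cumulative fluid amount served by link j in slots 0..t-1.
  The input available to link 0 at slot t is lam*t (arrivals of slots < t);
  the input available to link j+1 at slot t is what link j served in slots < t.\<close>
fun cum :: "(nat \<Rightarrow> nat \<Rightarrow> bool) \<Rightarrow> (nat \<Rightarrow> real) \<Rightarrow> real \<Rightarrow> nat \<Rightarrow> nat \<Rightarrow> real" where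
  "cum mu w lam j 0 = 0"
| "cum mu w lam j (Suc t) = cum mu w lam j t +
     (if mu t j then
        min ((if j = 0 then lam * real t else cum mu w lam (j - 1) t) - cum mu w lam j t) (w j)
      else 0)"

text \<open>Delay of the fluid particle at cumulative position x >= 0 (FCFS): it arrives in slot
  floor(x/lam) and is served at the last link in the first slot t with x < cum (n-1) (t+1).\<close>
definition delay :: "nat \<Rightarrow> (nat \<Rightarrow> nat \<Rightarrow> bool) \<Rightarrow> (nat \<Rightarrow> real) \<Rightarrow> real \<Rightarrow> real \<Rightarrow> ereal" where
  "delay n mu w lam x =
     (if \<exists>t. x < cum mu w lam (n - 1) (Suc t)
      then ereal (real (LEAST t. x < cum mu w lam (n - 1) (Suc t)) - real (nat \<lfloor>x / lam\<rfloor>))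
      else \<infinity>)"

definition tau_lam :: "nat \<Rightarrow> (nat \<Rightarrow> nat \<Rightarrow> bool) \<Rightarrow> (nat \<Rightarrow> real) \<Rightarrow> real \<Rightarrow> ereal" where
  "tau_lam n mu w lam = (SUP x\<in>{0..}. delay n mu w lam x)"

definition tau_star :: "nat \<Rightarrow> (nat \<Rightarrow> nat \<Rightarrow> bool) \<Rightarrow> (nat \<Rightarrow> real) \<Rightarrow> ereal" where
  "tau_star n mu w = Lim (at_right 0) (tau_lam n mu w)"

definition deadline_optimal :: "nat \<Rightarrow> nat \<Rightarrow> (nat \<Rightarrow> real) \<Rightarrow> (nat \<Rightarrow> nat \<Rightarrow> bool) \<Rightarrow> bool" where
  "deadline_optimal n phi w mu \<longleftrightarrow>
     (\<forall>mu' K'. admissible n phi mu' \<and> cyclic mu' K' \<longrightarrow> tau_star n mu w \<le> tau_star n mu' w)"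

end

theory Submission imports Defs begin

text \<open>For small arrival rates the link widths never bind, so an activated link forwards its whole
queue. The fluid of one arrival slot then travels as a packet, served at link j in the first
activation of j after its service at link j - 1. Under ORR the packet arriving in slot s waits for
the next multiple of phi + 1 and then advances one link per slot, so its delay is at most n + phi,
with equality for s = 0. For any other admissible cyclic policy take consecutive packets m, m + 1
whose service slots at the last link differ. Packet m + 1 is then served at every link strictly
after packet m, at link 0 already in slot m + 1, and the slots in which links 0, ..., phi serve
packet m and all n links serve packet m + 1 are n + phi + 1 distinct slots between m + 1 and the
service of packet m + 1 at the last link: two of them could only coincide for distinct links
within phi hops. So packet m + 1 has delay at least n + phi.\<close>

lemma mod_neq_if_less_diff:
  fixes i j p :: nat
  assumes "i < j" and "j - i < p"
  shows "i mod p \<noteq> j mod p"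
proof
  assume "i mod p = j mod p"
  then have "p dvd j - i" using assms(1) mod_eq_dvd_iff_nat[of i j p] by simp
  then show False using assms by (auto dest: dvd_imp_le)
qed

lemma next_multiple_le:
  fixes p s y :: nat
  assumes "p dvd y" and "s < y"
  shows "(s div p + 1) * p \<le> y"
proof -
  obtain q where y: "y = p * q" using assms(1) by (rule dvdE)
  then have "s div p < q" using assms(2) by (simp add: less_mult_imp_div_less mult.commute)
  then have "(s div p + 1) * p \<le> q * p" by (intro mult_le_mono1) simp
  then show ?thesis unfolding y by (simp add: mult.commute)
qed

lemma less_next_multiple: "0 < p \<Longrightarrow> s < (s div p + 1) * (p :: nat)"
  using dividend_less_div_times[of p s] by (simp add: add.commute)

lemma Lim_at_right_eventually_const:
  assumes "eventually (\<lambda>x. f x = c) (at_right (0::real))"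
  shows "Lim (at_right 0) f = (c :: ereal)"
  by (rule tendsto_Lim) (auto intro: tendsto_eventually[OF assms])

lemma less_mult_iff_nat_floor_div_less:
  assumes "x \<ge> 0" and "lam > 0"
  shows "x < lam * real k \<longleftrightarrow> nat \<lfloor>x / lam\<rfloor> < k"
proof -
  have "x < lam * real k \<longleftrightarrow> x / lam < real k"
    using assms by (simp add: pos_divide_less_eq mult.commute)
  also have "\<dots> \<longleftrightarrow> nat \<lfloor>x / lam\<rfloor> < k"
    using assms by (simp add: floor_less_iff nat_less_iff)
  finally show ?thesis .
qed

lemma range_nat_floor_div: "(lam::real) > 0 \<Longrightarrow> (\<lambda>x. nat \<lfloor>x / lam\<rfloor>) ` {0..} = UNIV"
proof (intro set_eqI iffI)
  fix s :: nat
  assume "lam > 0"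
  then have "nat \<lfloor>(lam * real s) / lam\<rfloor> = s" and "lam * real s \<in> {0..}" by simp_all
  then show "s \<in> (\<lambda>x. nat \<lfloor>x / lam\<rfloor>) ` {0..}" by (metis image_eqI)
qed auto

section \<open>Forwarding whole queues\<close>

text \<open>departed mu j t counts the arrival slots whose fluid has left link j before slot t when every
  activated link forwards its whole queue.\<close>

fun departed :: "(nat \<Rightarrow> nat \<Rightarrow> bool) \<Rightarrow> nat \<Rightarrow> nat \<Rightarrow> nat" where
  "departed mu j 0 = 0"
| "departed mu j (Suc t) =
     (if mu t j then (if j = 0 then t else departed mu (j - 1) t) else departed mu j t)"

definition available :: "(nat \<Rightarrow> nat \<Rightarrow> bool) \<Rightarrow> nat \<Rightarrow> nat \<Rightarrow> nat" where
  "available mu j t = (if j = 0 then t else departed mu (j - 1) t)"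

lemma departed_Suc: "departed mu j (Suc t) = (if mu t j then available mu j t else departed mu j t)"
  by (simp add: available_def)

declare departed.simps(2)[simp del]

lemma departed_le_available: "departed mu j t \<le> available mu j t"
proof (induction t arbitrary: j)
  case 0
  then show ?case by (simp add: available_def)
next
  case (Suc t)
  have "available mu j t \<le> available mu j (Suc t)"
    using Suc[of "j - 1"] by (auto simp: available_def departed_Suc)
  then show ?case
    using Suc[of j] by (auto simp: departed_Suc)
qed

lemma departed_mono: "t \<le> t' \<Longrightarrow> departed mu j t \<le> departed mu j t'"
  by (rule lift_Suc_mono_le[of "departed mu j"])
    (use departed_le_available in \<open>auto simp: departed_Suc\<close>)

lemma available_mono: "t \<le> t' \<Longrightarrow> available mu j t \<le> available mu j t'"
  by (simp add: available_def departed_mono)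

lemma departed_le: "departed mu j t \<le> t"
proof (induction j)
  case 0
  then show ?case using departed_le_available[of mu 0 t] by (simp add: available_def)
next
  case (Suc j)
  then show ?case using departed_le_available[of mu "Suc j" t] by (simp add: available_def)
qed

lemma available_le: "available mu j t \<le> t"
  by (simp add: available_def departed_le)

lemma less_departed_iff: "s < departed mu j t \<longleftrightarrow> (\<exists>t'<t. mu t' j \<and> s < available mu j t')"
proof (induction t)
  case 0
  then show ?case by simp
next
  case (Suc t)
  show ?case
  proof (cases "mu t j")
    case True
    have "(\<exists>t'<Suc t. mu t' j \<and> s < available mu j t') \<longleftrightarrow> s < available mu j t"
      using available_mono[of _ t mu j] True less_Suc_eq_le order.strict_trans2 by blast
    then show ?thesis using True by (simp add: departed_Suc)
  next
    case False
    then show ?thesis using Suc by (auto simp: departed_Suc less_Suc_eq)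
  qed
qed

definition next_activation :: "(nat \<Rightarrow> nat \<Rightarrow> bool) \<Rightarrow> nat \<Rightarrow> nat \<Rightarrow> nat" where
  "next_activation mu j u = (LEAST t. u < t \<and> mu t j)"

lemma next_activation_le: "u < t \<Longrightarrow> mu t j \<Longrightarrow> next_activation mu j u \<le> t"
  unfolding next_activation_def by (rule Least_le) simp

lemma next_activation_Suc: "mu (Suc u) j \<Longrightarrow> next_activation mu j u = Suc u"
  unfolding next_activation_def by (rule Least_equality) auto

text \<open>Fluid arriving in slot s, or served at link j - 1 in slot s, can be served at link j from
  slot s + 1 on; hence the strict inequality in next_activation.\<close>

fun service_slot :: "(nat \<Rightarrow> nat \<Rightarrow> bool) \<Rightarrow> nat \<Rightarrow> nat \<Rightarrow> nat" where
  "service_slot mu 0 s = next_activation mu 0 s"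
| "service_slot mu (Suc j) s = next_activation mu (Suc j) (service_slot mu j s)"

lemma service_slot_eq_propagates:
  assumes "service_slot mu j s = service_slot mu j s'" and "j \<le> k"
  shows "service_slot mu k s = service_slot mu k s'"
  using assms(2) by (induction k rule: dec_induct) (simp_all add: assms(1))

definition slot_delay :: "nat \<Rightarrow> (nat \<Rightarrow> nat \<Rightarrow> bool) \<Rightarrow> nat \<Rightarrow> ereal" where
  "slot_delay n mu s = ereal (real (service_slot mu (n - 1) s) - real s)"

lemma admissible_exclusive:
  "admissible n phi mu \<Longrightarrow> j < n \<Longrightarrow> j' < n \<Longrightarrow> j \<noteq> j' \<Longrightarrow> j \<le> j' + phi \<Longrightarrow> j' \<le> j + phi
    \<Longrightarrow> \<not> (mu t j \<and> mu t j')"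
  unfolding admissible_def by blast

section \<open>Cyclic schedules serving every link\<close>

locale served_line =
  fixes n K :: nat and mu :: "nat \<Rightarrow> nat \<Rightarrow> bool"
  assumes cyclic: "cyclic mu K" and served: "\<And>j. j < n \<Longrightarrow> \<exists>t. mu t j"
begin

lemma period_pos: "K > 0"
  using cyclic by (simp add: cyclic_def)

lemma periodic: "mu (t + q * K) = mu t"
proof (induction q)
  case (Suc q)
  have "mu (t + Suc q * K) = mu ((t + q * K) + K)" by (simp add: algebra_simps)
  also have "\<dots> = mu t" using cyclic Suc by (simp add: cyclic_def)
  finally show ?case .
qed simp

lemma next_activation:
  assumes "j < n"
  shows "u < next_activation mu j u" and "mu (next_activation mu j u) j"
    and "next_activation mu j u \<le> u + K"
proof -
  obtain t where "mu t j" using served assms by blast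
  then have "mu (t + Suc u * K) j" by (simp only: periodic)
  moreover have "u < t + Suc u * K" using period_pos mult_le_mono2[of 1 K "Suc u"] by simp
  ultimately have "u < t + Suc u * K \<and> mu (t + Suc u * K) j" by simp
  then have s: "u < next_activation mu j u \<and> mu (next_activation mu j u) j"
    unfolding next_activation_def by (rule LeastI)
  then show "u < next_activation mu j u" and "mu (next_activation mu j u) j" by auto
  show "next_activation mu j u \<le> u + K"
  proof (rule ccontr)
    assume late: "\<not> next_activation mu j u \<le> u + K"
    \<comment> \<open>one period earlier the link is active as well, and still after u\<close>
    have "mu (next_activation mu j u - K) j"
      using s late periodic[of "next_activation mu j u - K" 1] by simp
    then have "next_activation mu j u \<le> next_activation mu j u - K"
      using late by (intro next_activation_le) auto
    then show False using late period_pos by linarith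
  qed
qed

lemma next_activation_mono: "j < n \<Longrightarrow> u \<le> u' \<Longrightarrow> next_activation mu j u \<le> next_activation mu j u'"
  using next_activation[of j u'] by (intro next_activation_le) auto

lemma next_activation_less_iff:
  "j < n \<Longrightarrow> next_activation mu j u < t \<longleftrightarrow> (\<exists>t'<t. mu t' j \<and> u < t')"
  using next_activation[of j u] next_activation_le[of u _ mu j] by (auto intro: le_less_trans)

lemma service_slot_active: "j < n \<Longrightarrow> mu (service_slot mu j s) j"
  by (cases j) (simp_all add: next_activation)

lemma service_slot_bounds:
  "j < n \<Longrightarrow> s < service_slot mu j s \<and> service_slot mu j s \<le> s + (j + 1) * K"
proof (induction j)
  case 0
  then show ?case using next_activation[of 0 s] by simp
next
  case (Suc j)
  then show ?case using next_activation[of "Suc j" "service_slot mu j s"] by simp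
qed

lemma service_slot_strict_mono_link: "i < j \<Longrightarrow> j < n \<Longrightarrow> service_slot mu i s < service_slot mu j s"
proof (induction j)
  case (Suc j)
  have "service_slot mu j s < service_slot mu (Suc j) s"
    using next_activation(1)[OF Suc.prems(2)] by simp
  then show ?case using Suc by (cases "i = j") auto
qed simp

lemma service_slot_mono_link: "i \<le> j \<Longrightarrow> j < n \<Longrightarrow> service_slot mu i s \<le> service_slot mu j s"
  using service_slot_strict_mono_link[of i j s] by (cases "i = j") auto

lemma strict_mono_on_service_slot: "strict_mono_on {..<n} (\<lambda>j. service_slot mu j s)"
  by (intro strict_mono_onI) (simp add: service_slot_strict_mono_link)

lemma service_slot_mono: "j < n \<Longrightarrow> s \<le> s' \<Longrightarrow> service_slot mu j s \<le> service_slot mu j s'"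
  by (induction j) (simp_all add: next_activation_mono)

lemma less_departed_iff_service_slot:
  "j < n \<Longrightarrow> s < departed mu j t \<longleftrightarrow> service_slot mu j s < t"
proof (induction j arbitrary: t)
  case 0
  then show ?case by (simp add: less_departed_iff available_def next_activation_less_iff)
next
  case (Suc i)
  then show ?case by (simp add: less_departed_iff available_def next_activation_less_iff)
qed

lemma departed_lag: "j < n \<Longrightarrow> t \<le> departed mu j t + (j + 1) * K"
proof (cases "t \<le> (j + 1) * K")
  case False
  assume j: "j < n"
  define s where "s = t - (j + 1) * K - 1"
  have "service_slot mu j s < t" using service_slot_bounds[OF j, of s] False unfolding s_def by linarith
  then have "s < departed mu j t" using less_departed_iff_service_slot[OF j] by blast
  then show ?thesis unfolding s_def by linarith
qed simp

lemma available_le_departed_add: "j < n \<Longrightarrow> available mu j t \<le> departed mu j t + n * K"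
  using available_le[of mu j t] departed_lag[of j t] mult_right_mono[of "j + 1" n K] by simp

lemma cum_eq_departed:
  assumes lam: "lam > 0" and wide: "\<And>j. j < n \<Longrightarrow> lam * real (n * K) \<le> w j"
  shows "j < n \<Longrightarrow> cum mu w lam j t = lam * real (departed mu j t)"
proof (induction t arbitrary: j)
  case 0
  then show ?case by simp
next
  case (Suc t)
  have input: "(if j = 0 then lam * real t else cum mu w lam (j - 1) t) = lam * real (available mu j t)"
    using Suc by (auto simp: available_def)
  \<comment> \<open>the queue never holds more than n K arrival slots of fluid, so it fits the width\<close>
  have "real (available mu j t) - real (departed mu j t) \<le> real (n * K)"
    using available_le_departed_add[OF Suc.prems, of t] by linarith
  then have "lam * (real (available mu j t) - real (departed mu j t)) \<le> lam * real (n * K)"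
    using lam by (intro mult_left_mono) auto
  then have "lam * real (available mu j t) - lam * real (departed mu j t) \<le> w j"
    using wide[OF Suc.prems] by (simp add: right_diff_distrib)
  then show ?case using Suc input by (simp add: departed_Suc)
qed

lemma delay_eq_slot_delay:
  assumes lam: "lam > 0" and wide: "\<And>j. j < n \<Longrightarrow> lam * real (n * K) \<le> w j"
    and n: "n \<ge> 1" and x: "x \<ge> 0"
  shows "delay n mu w lam x = slot_delay n mu (nat \<lfloor>x / lam\<rfloor>)"
proof -
  define s where "s = nat \<lfloor>x / lam\<rfloor>"
  have last: "n - 1 < n" using n by simp
  have served_by: "x < cum mu w lam (n - 1) (Suc t) \<longleftrightarrow> service_slot mu (n - 1) s \<le> t" for t
  proof -
    have "x < cum mu w lam (n - 1) (Suc t) \<longleftrightarrow> x < lam * real (departed mu (n - 1) (Suc t))"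
      by (simp only: cum_eq_departed[OF lam wide last])
    also have "\<dots> \<longleftrightarrow> s < departed mu (n - 1) (Suc t)"
      unfolding s_def by (rule less_mult_iff_nat_floor_div_less[OF x lam])
    also have "\<dots> \<longleftrightarrow> service_slot mu (n - 1) s < Suc t"
      by (rule less_departed_iff_service_slot[OF last])
    finally show ?thesis by (simp only: less_Suc_eq_le)
  qed
  have "(LEAST t. x < cum mu w lam (n - 1) (Suc t)) = service_slot mu (n - 1) s"
    by (rule Least_equality) (simp_all only: served_by le_refl)
  then show ?thesis
    unfolding delay_def slot_delay_def s_def using served_by by auto
qed

lemma tau_lam_eq_SUP_slot_delay:
  assumes "lam > 0" and "\<And>j. j < n \<Longrightarrow> lam * real (n * K) \<le> w j" and "n \<ge> 1"
  shows "tau_lam n mu w lam = (SUP s. slot_delay n mu s)"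
proof -
  have "tau_lam n mu w lam = (SUP x\<in>{0..}. slot_delay n mu (nat \<lfloor>x / lam\<rfloor>))"
    unfolding tau_lam_def using delay_eq_slot_delay[OF assms] by (intro SUP_cong) auto
  also have "\<dots> = Sup (slot_delay n mu ` (\<lambda>x. nat \<lfloor>x / lam\<rfloor>) ` {0..})"
    by (simp add: image_image)
  also have "\<dots> = (SUP s. slot_delay n mu s)"
    by (simp only: range_nat_floor_div[OF assms(1)])
  finally show ?thesis .
qed

lemma tau_star_eq_SUP_slot_delay:
  assumes n: "n \<ge> 1" and w: "\<forall>j<n. w j > 0"
  shows "tau_star n mu w = (SUP s. slot_delay n mu s)"
proof -
  define m where "m = Min (w ` {..<n})"
  have fin: "finite (w ` {..<n})" "w ` {..<n} \<noteq> {}" using n by (auto simp: lessThan_empty_iff)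
  have "m > 0" unfolding m_def using Min_gr_iff[OF fin] w by auto
  moreover have nK: "real (n * K) > 0" using n period_pos by simp
  ultimately have small: "m / real (n * K) > 0" by simp
  have "lam * real (n * K) \<le> w j" if "lam < m / real (n * K)" and "j < n" for lam j
  proof -
    have "lam * real (n * K) \<le> m" using that nK by (simp add: pos_less_divide_eq)
    also have "m \<le> w j" unfolding m_def using that fin by (intro Min_le) auto
    finally show ?thesis .
  qed
  then have "eventually (\<lambda>lam. tau_lam n mu w lam = (SUP s. slot_delay n mu s)) (at_right 0)"
    unfolding eventually_at_right_field using small tau_lam_eq_SUP_slot_delay[OF _ _ n] by blast
  then show ?thesis unfolding tau_star_def by (rule Lim_at_right_eventually_const)
qed

lemma exists_service_gap:
  assumes "j < n"
  shows "\<exists>m. service_slot mu j m < service_slot mu j (Suc m)"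
proof (rule ccontr)
  assume "\<not> ?thesis"
  then have step: "service_slot mu j (Suc m) = service_slot mu j m" for m
    using service_slot_mono[OF assms, of m "Suc m"] by (simp add: le_less)
  have const: "service_slot mu j m = service_slot mu j 0" for m
    by (induction m) (simp_all only: step)
  show False
    using const[of "service_slot mu j 0"] service_slot_bounds[OF assms, of "service_slot mu j 0"]
    by simp
qed

lemma service_slot_less_if_later_less:
  assumes "j \<le> k" and "k < n" and "s \<le> s'"
    and "service_slot mu k s < service_slot mu k s'"
  shows "service_slot mu j s < service_slot mu j s'"
proof -
  have "service_slot mu j s \<noteq> service_slot mu j s'"
    using service_slot_eq_propagates[of mu j s s' k] assms(1,4) by auto
  then show ?thesis using service_slot_mono[of j s s'] assms(1-3) by simp
qed

lemma service_at_link0_after_gap: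
  assumes "0 < n" and gap: "service_slot mu 0 m < service_slot mu 0 (Suc m)"
  shows "service_slot mu 0 m = Suc m"
proof (rule ccontr)
  assume "service_slot mu 0 m \<noteq> Suc m"
  moreover have "m < service_slot mu 0 m" and "mu (service_slot mu 0 m) 0"
    using next_activation[OF assms(1)] by simp_all
  ultimately have "service_slot mu 0 (Suc m) \<le> service_slot mu 0 m"
    by (simp add: next_activation_le)
  then show False using gap by simp
qed

lemma service_slots_distinct:
  assumes adm: "admissible n phi mu" and j: "j \<le> phi" "j < n" and i: "i < n"
    and later: "service_slot mu j s < service_slot mu j s'"
  shows "service_slot mu j s \<noteq> service_slot mu i s'"
proof
  assume eq: "service_slot mu j s = service_slot mu i s'"
  consider "i = j" | "j < i" | "i < j" by linarith
  then show False
  proof cases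
    case 1
    then show False using later eq by simp
  next
    case 2
    then show False using later eq service_slot_strict_mono_link[OF 2 i, of s'] by simp
  next
    case 3
    then have "\<not> (mu (service_slot mu j s) j \<and> mu (service_slot mu j s) i)"
      using admissible_exclusive[OF adm j(2) i] j(1) by simp
    then show False
      using eq service_slot_active[OF j(2), of s] service_slot_active[OF i, of s'] by simp
  qed
qed

lemma service_slots_around_gap:
  assumes gap: "service_slot mu (n - 1) m < service_slot mu (n - 1) (Suc m)" and j: "j < n"
  shows "Suc m \<le> service_slot mu j m" and "service_slot mu j m < service_slot mu j (Suc m)"
    and "service_slot mu j (Suc m) \<le> service_slot mu (n - 1) (Suc m)"
proof -
  have later: "service_slot mu i m < service_slot mu i (Suc m)" if "i < n" for i
    using service_slot_less_if_later_less[of i "n - 1"] that gap by simp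
  then show "service_slot mu j m < service_slot mu j (Suc m)" using j .
  have "service_slot mu 0 m = Suc m" using service_at_link0_after_gap later[of 0] j by simp
  then show "Suc m \<le> service_slot mu j m" using service_slot_mono_link[of 0 j m] j by simp
  show "service_slot mu j (Suc m) \<le> service_slot mu (n - 1) (Suc m)"
    using service_slot_mono_link[of j "n - 1"] j by simp
qed

lemma slot_delay_after_gap:
  assumes adm: "admissible n phi mu" and phi: "phi < n"
    and gap: "service_slot mu (n - 1) m < service_slot mu (n - 1) (Suc m)"
  shows "ereal (real (n + phi)) \<le> slot_delay n mu (Suc m)"
proof -
  define c where "c j = service_slot mu j m" for j
  define b where "b j = service_slot mu j (Suc m)" for j
  note around = service_slots_around_gap[OF gap, folded c_def b_def]
  have inj: "inj_on c {..phi}" "inj_on b {..<n}"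
    using strict_mono_on_imp_inj_on[OF strict_mono_on_service_slot] phi
    unfolding c_def b_def by (auto intro: inj_on_subset[of _ "{..<n}"])
  have "c j \<noteq> b i" if "j \<le> phi" and "i < n" for i j
    using service_slots_distinct[OF adm that(1) _ that(2)] around(2)[of j] that phi
    unfolding c_def b_def by simp
  then have disjoint: "c ` {..phi} \<inter> b ` {..<n} = {}" by blast
  have "c ` {..phi} \<union> b ` {..<n} \<subseteq> {Suc m..b (n - 1)}"
  proof (intro Un_least image_subsetI)
    show "c j \<in> {Suc m..b (n - 1)}" if "j \<in> {..phi}" for j
      using around[of j] that phi by auto
    show "b j \<in> {Suc m..b (n - 1)}" if "j \<in> {..<n}" for j
      using around[of j] that by auto
  qed
  then have "card (c ` {..phi} \<union> b ` {..<n}) \<le> card {Suc m..b (n - 1)}"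
    by (rule card_mono[OF finite_atLeastAtMost])
  moreover have "card (c ` {..phi} \<union> b ` {..<n}) = Suc phi + n"
    using card_Un_disjoint[OF _ _ disjoint] card_image[OF inj(1)] card_image[OF inj(2)] by simp
  ultimately have "real (n + phi) \<le> real (service_slot mu (n - 1) (Suc m)) - real (Suc m)"
    unfolding b_def by simp
  then show ?thesis unfolding slot_delay_def by simp
qed

lemma tau_star_lower_bound:
  assumes "admissible n phi mu" and "phi < n" and "\<forall>j<n. w j > 0"
  shows "ereal (real (n + phi)) \<le> tau_star n mu w"
proof -
  obtain m where gap: "service_slot mu (n - 1) m < service_slot mu (n - 1) (Suc m)"
    using exists_service_gap[of "n - 1"] assms(2) by auto
  have "ereal (real (n + phi)) \<le> slot_delay n mu (Suc m)"
    by (rule slot_delay_after_gap[OF assms(1,2) gap])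
  also have "\<dots> \<le> (SUP s. slot_delay n mu s)" by (rule SUP_upper) simp
  also have "\<dots> = tau_star n mu w"
    using tau_star_eq_SUP_slot_delay assms(2,3) by simp
  finally show ?thesis .
qed

end

lemma cum_eq_0_if_never_active:
  assumes never: "\<And>t. \<not> mu t j0" and w: "\<forall>j<n. w j > 0" and "j0 \<le> j" and "j < n"
  shows "cum mu w lam j t = 0"
  using assms(3,4)
proof (induction j arbitrary: t rule: dec_induct)
  case base
  show ?case using never by (induction t) simp_all
next
  case (step k)
  have "w (Suc k) > 0" using w step.prems by simp
  then show ?case using step.IH step.prems by (induction t) simp_all
qed

lemma tau_star_eq_infinity_if_never_active:
  assumes never: "\<And>t. \<not> mu t j0" and "j0 < n" and w: "\<forall>j<n. w j > 0"
  shows "tau_star n mu w = \<infinity>"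
proof -
  have "cum mu w lam (n - 1) t = 0" for lam t
    using cum_eq_0_if_never_active[of mu j0 n w "n - 1"] never w assms(2) by simp
  then have "delay n mu w lam x = \<infinity>" if "x \<ge> 0" for lam x
    using that unfolding delay_def by (simp del: cum.simps)
  then have "tau_lam n mu w lam = \<infinity>" for lam
    unfolding tau_lam_def by (simp add: SUP_cong[OF refl, of "{0..}"])
  then show ?thesis
    unfolding tau_star_def by (intro Lim_at_right_eventually_const) simp
qed

lemma tau_star_ge_if_admissible_cyclic:
  assumes "admissible n phi mu" and "cyclic mu K" and "phi < n" and w: "\<forall>j<n. w j > 0"
  shows "ereal (real (n + phi)) \<le> tau_star n mu w"
proof (cases "\<forall>j<n. \<exists>t. mu t j")
  case True
  then interpret served_line n K mu
    using assms(2) by unfold_locales auto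
  show ?thesis by (rule tau_star_lower_bound[OF assms(1,3) w])
next
  case False
  then obtain j0 where "j0 < n" and "\<And>t. \<not> mu t j0" by blast
  then have "tau_star n mu w = \<infinity>" using tau_star_eq_infinity_if_never_active w by blast
  then show ?thesis by simp
qed

section \<open>Ordered round robin\<close>

lemma admissible_ORR: "admissible n phi (ORR n phi)"
  unfolding admissible_def
proof (intro conjI allI impI)
  show "j < n" if "ORR n phi t j" for t j
    using that by (simp add: ORR_def)
  show "\<not> (ORR n phi t j \<and> ORR n phi t j')"
    if close: "j < n" "j' < n" "j \<noteq> j'" "j \<le> j' + phi \<and> j' \<le> j + phi" for t j j'
  proof
    assume "ORR n phi t j \<and> ORR n phi t j'"
    then have eq: "j mod (phi + 1) = j' mod (phi + 1)" by (simp add: ORR_def)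
    consider "j < j'" | "j' < j" using close(3) by linarith
    then show False
    proof cases
      case 1
      then have "j' - j < phi + 1" using close(4) by linarith
      then show False using 1 eq mod_neq_if_less_diff by blast
    next
      case 2
      then have "j - j' < phi + 1" using close(4) by linarith
      then show False using 2 eq mod_neq_if_less_diff by metis
    qed
  qed
qed

lemma cyclic_ORR: "cyclic (ORR n phi) (phi + 1)"
proof -
  have "(t + (phi + 1)) mod (phi + 1) = t mod (phi + 1)" for t by (rule mod_add_self2)
  then show ?thesis by (simp add: cyclic_def ORR_def fun_eq_iff)
qed

lemma served_line_ORR: "served_line n (phi + 1) (ORR n phi)"
proof
  show "cyclic (ORR n phi) (phi + 1)" by (rule cyclic_ORR)
  show "\<exists>t. ORR n phi t j" if "j < n" for j
    using that by (intro exI[of _ j]) (simp add: ORR_def)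
qed

lemma service_slot_ORR:
  assumes "j < n"
  shows "service_slot (ORR n phi) j s = (s div (phi + 1) + 1) * (phi + 1) + j"
proof -
  define p where "p = phi + 1"
  have "0 < p" by (simp add: p_def)
  have "service_slot (ORR n phi) j s = (s div p + 1) * p + j"
    using assms
  proof (induction j)
    case 0
    have "next_activation (ORR n phi) 0 s = (s div p + 1) * p"
      unfolding next_activation_def ORR_def p_def[symmetric]
    proof (rule Least_equality)
      show "s < (s div p + 1) * p \<and> 0 < n \<and> 0 mod p = (s div p + 1) * p mod p"
        using 0 less_next_multiple[OF \<open>0 < p\<close>, of s] by simp
      show "(s div p + 1) * p \<le> y" if "s < y \<and> 0 < n \<and> 0 mod p = y mod p" for y
        using that next_multiple_le[of p y s] by (simp add: dvd_eq_mod_eq_0)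
    qed
    then show ?case by simp
  next
    case (Suc j)
    have "Suc ((s div p + 1) * p + j) mod p = Suc j mod p"
      by (metis add_Suc add.commute mod_mult_self1)
    then have "ORR n phi (Suc ((s div p + 1) * p + j)) (Suc j)"
      using Suc.prems unfolding ORR_def p_def[symmetric] by simp
    then show ?case using Suc by (simp add: next_activation_Suc)
  qed
  then show ?thesis by (simp add: p_def)
qed

lemma slot_delay_ORR:
  assumes "n \<ge> 1"
  shows "slot_delay n (ORR n phi) s \<le> ereal (real (n + phi))"
    and "slot_delay n (ORR n phi) 0 = ereal (real (n + phi))"
proof -
  have slot: "service_slot (ORR n phi) (n - 1) s = s div (phi + 1) * (phi + 1) + (n + phi)" for s
    using service_slot_ORR[of "n - 1" n phi s] assms by simp
  have "s div (phi + 1) * (phi + 1) \<le> s" by (rule div_times_less_eq_dividend)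
  then have "real (service_slot (ORR n phi) (n - 1) s) \<le> real s + real (n + phi)"
    unfolding slot by linarith
  then show "slot_delay n (ORR n phi) s \<le> ereal (real (n + phi))"
    unfolding slot_delay_def by simp
  show "slot_delay n (ORR n phi) 0 = ereal (real (n + phi))"
    unfolding slot_delay_def slot by simp
qed

lemma tau_star_ORR:
  assumes "n \<ge> 1" and "\<forall>j<n. w j > 0"
  shows "tau_star n (ORR n phi) w = ereal (real (n + phi))"
proof -
  interpret served_line n "phi + 1" "ORR n phi" by (rule served_line_ORR)
  have "tau_star n (ORR n phi) w = (SUP s. slot_delay n (ORR n phi) s)"
    by (rule tau_star_eq_SUP_slot_delay[OF assms])
  also have "\<dots> = ereal (real (n + phi))"
  proof (rule antisym)
    show "(SUP s. slot_delay n (ORR n phi) s) \<le> ereal (real (n + phi))"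
      by (rule SUP_least) (rule slot_delay_ORR(1)[OF assms(1)])
    show "ereal (real (n + phi)) \<le> (SUP s. slot_delay n (ORR n phi) s)"
      using slot_delay_ORR(2)[OF assms(1)] by (intro SUP_upper2[of 0]) simp_all
  qed
  finally show ?thesis .
qed

lemma rate_ORR:
  assumes "e < n"
  shows "rate (ORR n phi) (phi + 1) e = 1 / real (phi + 1)"
proof -
  have "(\<Sum>t<phi + 1. if ORR n phi t e then 1 else 0 :: real)
      = (\<Sum>t<phi + 1. if t = e mod (phi + 1) then 1 else 0)"
    using assms by (intro sum.cong) (auto simp: ORR_def)
  also have "\<dots> = 1"
    using mod_less_divisor[of "phi + 1" e] by (simp only: sum.delta finite_lessThan lessThan_iff) simp
  finally show ?thesis unfolding rate_def by simp
qed

theorem theorem3: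
  fixes n phi :: nat and w :: "nat \<Rightarrow> real"
  assumes "n \<ge> 1" and "phi \<le> n - 1" and "\<forall>j<n. w j > 0"
  shows "admissible n phi (ORR n phi) \<and> cyclic (ORR n phi) (phi + 1)
    \<and> deadline_optimal n phi w (ORR n phi)
    \<and> tau_star n (ORR n phi) w = ereal (real (n + phi))
    \<and> (\<forall>e<n. rate (ORR n phi) (phi + 1) e = 1 / real (phi + 1))"
proof (intro conjI)
  have phi: "phi < n" using assms(1,2) by simp
  show "admissible n phi (ORR n phi)" by (rule admissible_ORR)
  show "cyclic (ORR n phi) (phi + 1)" by (rule cyclic_ORR)
  show "\<forall>e<n. rate (ORR n phi) (phi + 1) e = 1 / real (phi + 1)" using rate_ORR by blast
  show tau: "tau_star n (ORR n phi) w = ereal (real (n + phi))"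
    by (rule tau_star_ORR[OF assms(1,3)])
  show "deadline_optimal n phi w (ORR n phi)"
    unfolding deadline_optimal_def tau
    using tau_star_ge_if_admissible_cyclic[OF _ _ phi assms(3)] by blast
qed

end
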